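(* Let $X_1,\dots,X_n$ be variables with ranges $D_1,\dots,D_n$ and let $A_1,\dots,A_m$ be events (sets of full assignments), $A_i$ depending only on the variables indexed by $\mathrm{vbl}(A_i)\subseteq[n]$. Let $G$ be the dependency graph on $[m]$ (distinct $i,j$ adjacent iff $\mathrm{vbl}(A_i)\cap\mathrm{vbl}(A_j)\neq\emptyset$). For an assignment $\sigma$, let $\mathrm{Res}(\sigma)$ be the output of the resampling-set selection procedure described in the context. Then for every $i\in\partial\,\mathrm{Res}(\sigma)$ we have $A_i\cap\sigma_{\mathrm{Res}(\sigma)}=\emptyset$.
   Context: Notation: $\mathrm{Bad}(\sigma)=\{i:\sigma\in A_i\}$; for $S\subseteq[m]$, $\partial S=\{i\notin S:\ i\text{ adjacent in }G\text{ to some }j\in S\}$ and $\mathrm{vbl}(S)=\bigcup_{i\in S}\mathrm{vbl}(A_i)$; $\sigma_S$ is the restriction of $\sigma$ to $\mathrm{vbl}(S)$. We write $A_i\cap\sigma_S=\emptyset$ if either $\mathrm{vbl}(A_i)\cap\mathrm{vbl}(S)=\emptyset$, or no assignment that agrees with $\sigma$ on $\mathrm{vbl}(A_i)\cap\mathrm{vbl}(S)$ belongs to $A_i$; otherwise $A_i\cap\sigma_S\ne\emptyset$. Selection procedure: start with $R=\mathrm{Bad}(\sigma)$ and $N=\emptyset$; while $\partial R\setminus N\neq\emptyset$, for each $i\in\partial R\setminus N$ (with $R$ the current set), add $i$ to $R$ if $A_i\cap\sigma_R\neq\emptyset$ and add $i$ to $N$ otherwise; when $\partial R\setminus N=\emptyset$,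 output $\mathrm{Res}(\sigma):=R$. *)

theory Defs
  imports "HOL-Library.FuncSet"
begin

text \<open>Variables are indexed by 0..<n (standing for [n]), events by 0..<m (standing for [m]).
  A full assignment is an element of the product space PiE {0..<n} D.\<close>

definition assignments :: "nat \<Rightarrow> (nat \<Rightarrow> 'a set) \<Rightarrow> (nat \<Rightarrow> 'a) set" where
  "assignments n D = PiE {0..<n} D"

definition dep_adj :: "(nat \<Rightarrow> nat set) \<Rightarrow> nat \<Rightarrow> nat \<Rightarrow> bool" where
  "dep_adj vbl i j \<longleftrightarrow> i \<noteq> j \<and> vbl i \<inter> vbl j \<noteq> {}"

definition Bad :: "nat \<Rightarrow> (nat \<Rightarrow> ('a \<Rightarrow> 'b) set) \<Rightarrow> ('a \<Rightarrow> 'b) \<Rightarrow> nat set" where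
  "Bad m A \<sigma> = {i. i < m \<and> \<sigma> \<in> A i}"

definition bdry :: "nat \<Rightarrow> (nat \<Rightarrow> nat set) \<Rightarrow> nat set \<Rightarrow> nat set" where
  "bdry m vbl S = {i. i < m \<and> i \<notin> S \<and> (\<exists>j\<in>S. dep_adj vbl i j)}"

definition vblS :: "(nat \<Rightarrow> nat set) \<Rightarrow> nat set \<Rightarrow> nat set" where
  "vblS vbl S = (\<Union>i\<in>S. vbl i)"

text \<open>A_i cap sigma_S = empty, in the sense of the paper.\<close>
definition disj_restr ::
  "nat \<Rightarrow> (nat \<Rightarrow> 'a set) \<Rightarrow> (nat \<Rightarrow> (nat \<Rightarrow> 'a) set) \<Rightarrow> (nat \<Rightarrow> nat set)
    \<Rightarrow> nat \<Rightarrow> (nat \<Rightarrow> 'a) \<Rightarrow> nat set \<Rightarrow> bool" where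
  "disj_restr n D A vbl i \<sigma> S \<longleftrightarrow>
     vbl i \<inter> vblS vbl S = {} \<or>
     \<not> (\<exists>\<tau>\<in>assignments n D. (\<forall>x\<in>vbl i \<inter> vblS vbl S. \<tau> x = \<sigma> x) \<and> \<tau> \<in> A i)"

text \<open>Reachable states (R, N) of the selection procedure. Each step processes one
  element i of (boundary R) - N against the current R; every execution of the
  procedure (for any processing order inside a round) is a sequence of such steps.\<close>
inductive sel_reach ::
  "nat \<Rightarrow> (nat \<Rightarrow> 'a set) \<Rightarrow> nat \<Rightarrow> (nat \<Rightarrow> (nat \<Rightarrow> 'a) set) \<Rightarrow> (nat \<Rightarrow> nat set)
    \<Rightarrow> (nat \<Rightarrow> 'a) \<Rightarrow> nat set \<Rightarrow> nat set \<Rightarrow> bool"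
  for n D m A vbl \<sigma> where
  init: "sel_reach n D m A vbl \<sigma> (Bad m A \<sigma>) {}"
| add_R: "sel_reach n D m A vbl \<sigma> R N \<Longrightarrow> i \<in> bdry m vbl R - N \<Longrightarrow>
          \<not> disj_restr n D A vbl i \<sigma> R \<Longrightarrow> sel_reach n D m A vbl \<sigma> (insert i R) N"
| add_N: "sel_reach n D m A vbl \<sigma> R N \<Longrightarrow> i \<in> bdry m vbl R - N \<Longrightarrow>
          disj_restr n D A vbl i \<sigma> R \<Longrightarrow> sel_reach n D m A vbl \<sigma> R (insert i N)"

definition is_Res ::
  "nat \<Rightarrow> (nat \<Rightarrow> 'a set) \<Rightarrow> nat \<Rightarrow> (nat \<Rightarrow> (nat \<Rightarrow> 'a) set) \<Rightarrow> (nat \<Rightarrow> nat set)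
    \<Rightarrow> (nat \<Rightarrow> 'a) \<Rightarrow> nat set \<Rightarrow> bool" where
  "is_Res n D m A vbl \<sigma> R \<longleftrightarrow> (\<exists>N. sel_reach n D m A vbl \<sigma> R N \<and> bdry m vbl R - N = {})"

end

theory Submission
  imports Defs
begin

text \<open>Along the procedure R only grows, and an event i that touches vbl(R) and is
  incompatible with \<sigma> on vbl(i) \<inter> vbl(R) stays incompatible when R grows, since the
  constraint only gets stronger. Every event put into N touches vbl(R) at that moment,
  so all of N remains disjoint from \<sigma> restricted to vbl(R); at termination the
  boundary of R lies inside N.\<close>

lemma bdry_meets_vblS:
  assumes "i \<in> bdry m vbl S"
  shows "vbl i \<inter> vblS vbl S \<noteq> {}"
  using assms unfolding bdry_def dep_adj_def vblS_def by blast

lemma disj_restr_mono: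
  assumes "disj_restr n D A vbl i \<sigma> S" and "vbl i \<inter> vblS vbl S \<noteq> {}" and "S \<subseteq> T"
  shows "disj_restr n D A vbl i \<sigma> T \<and> vbl i \<inter> vblS vbl T \<noteq> {}"
proof -
  have "vblS vbl S \<subseteq> vblS vbl T"
    using \<open>S \<subseteq> T\<close> unfolding vblS_def by blast
  then show ?thesis
    using assms(1,2) unfolding disj_restr_def by blast
qed

lemma sel_reach_N_disj_restr:
  assumes "sel_reach n D m A vbl \<sigma> R N" and "j \<in> N"
  shows "disj_restr n D A vbl j \<sigma> R \<and> vbl j \<inter> vblS vbl R \<noteq> {}"
  using assms
proof (induction arbitrary: j rule: sel_reach.induct)
  case init
  then show ?case by simp
next
  case (add_R R N i)
  then show ?case
    using disj_restr_mono[of n D A vbl j \<sigma> R "insert i R"] by blast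
next
  case (add_N R N i)
  then show ?case
    using bdry_meets_vblS[of i m vbl R] by blast
qed

theorem lemma23:
  fixes n m :: nat and D :: "nat \<Rightarrow> 'a set" and A :: "nat \<Rightarrow> (nat \<Rightarrow> 'a) set"
    and vbl :: "nat \<Rightarrow> nat set" and \<sigma> :: "nat \<Rightarrow> 'a" and R :: "nat set"
  assumes vbl_sub: "\<And>i. i < m \<Longrightarrow> vbl i \<subseteq> {0..<n}"
    and A_sub: "\<And>i. i < m \<Longrightarrow> A i \<subseteq> assignments n D"
    and A_dep: "\<And>i \<tau> \<rho>. i < m \<Longrightarrow> \<tau> \<in> assignments n D \<Longrightarrow> \<rho> \<in> assignments n D \<Longrightarrow>
                  (\<forall>x\<in>vbl i. \<tau> x = \<rho> x) \<Longrightarrow> (\<tau> \<in> A i \<longleftrightarrow> \<rho> \<in> A i)"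
    and sigma: "\<sigma> \<in> assignments n D"
    and Res: "is_Res n D m A vbl \<sigma> R"
  shows "\<forall>i\<in>bdry m vbl R. disj_restr n D A vbl i \<sigma> R"
proof
  fix i assume "i \<in> bdry m vbl R"
  obtain N where reach: "sel_reach n D m A vbl \<sigma> R N" and halted: "bdry m vbl R - N = {}"
    using Res unfolding is_Res_def by blast
  have "i \<in> N"
    using \<open>i \<in> bdry m vbl R\<close> halted by blast
  then show "disj_restr n D A vbl i \<sigma> R"
    using sel_reach_N_disj_restr[OF reach] by blast
qed

end
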